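(* Let $N\ge3$, $\gamma\in(0,1)$, assume $\chi$ satisfies (C1),(C2), and assume that for some $C_v>0$ the solution satisfies $v(r,t)\le C_v r^{2-N}$ for all $r\in(0,R)$, $t\in(0,T_{\max})$. Then there is $C>0$, depending only on $R,\chi_0,a,N,k,C_v$, such that for all $t\in(0,T_{\max})$ and $s_0\in(0,R^N)$, $$I_2(s_0,t)\ge C\int_0^{s_0}s^{-\gamma+(1-\frac2N)k}(s_0-s)w(s,t)w_s(s,t)\,ds .$$
   Context: Let $N\ge3$, $R>0$, $\Omega=B_R(0)\subset\mathbb{R}^N$, $m\ge1$, $\chi:(0,\infty)\to\mathbb{R}$. System (KS): $u_t=\Delta(u+1)^m-\nabla\cdot(u\chi(v)\nabla v)$, $0=\Delta v-v+u$ in $\Omega\times(0,\infty)$, $\partial_\nu u=\partial_\nu v=0$ on $\partial\Omega$, $u(\cdot,0)=u_0$, with $u_0\in C^0(\overline\Omega)\setminus\{0\}$ radially symmetric, nonnegative, $M_0=\int_\Omega u_0$. $\eta:=M_0\int_0^\infty(4\pi t)^{-N/2}e^{-(t+\frac{(2R)^2}{4t})}dt$. (C1): $\chi(s)\ge\chi_0(a+s)^{-k}$ for all $s>0$, with $\chi_0>0,a\ge0,k>0$. (C2): $\chi\in C^1((0,\infty))\cap L^\infty(\eta,\infty)$. $(u,v)$ denotes the maximal radial nonnegative classical solution on $[0,T_{\max})$; $u(r,t),v(r,t)$ with $r=|x|$. Define $w(s,t):=\int_0^{s^{1/N}}\rho^{N-1}u(\rho,t)d\rho$, $z(s,t):=\int_0^{s^{1/N}}\rho^{N-1}v(\rho,t)d\rho$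 for $s\in[0,R^N]$, and $I_2(s_0,t):=N\int_0^{s_0}s^{-\gamma}(s_0-s)\chi(Nz_s(s,t))w(s,t)w_s(s,t)\,ds$. *)

theory Defs
  imports "HOL-Analysis.Analysis"
begin

definition pd :: "(real^'n \<Rightarrow> real) \<Rightarrow> 'n \<Rightarrow> real^'n \<Rightarrow> real" where
  "pd f i x = deriv (\<lambda>h. f (x + h *\<^sub>R axis i 1)) 0"

definition grad :: "(real^'n \<Rightarrow> real) \<Rightarrow> real^'n \<Rightarrow> real^'n" where
  "grad f x = (\<chi> i. pd f i x)"

definition dvg :: "(real^'n \<Rightarrow> real^'n) \<Rightarrow> real^'n \<Rightarrow> real" where
  "dvg F x = (\<Sum>i\<in>UNIV. pd (\<lambda>y. F y $ i) i x)"

definition tint :: "ereal \<Rightarrow> real set" where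
  "tint T = {t. 0 < t \<and> ereal t < T}"

text \<open>u(.,t) belongs to C^2 on the closed ball, jointly continuously in (x,t) on
  closed ball times (0,T): derivatives exist in the interior and extend continuously.\<close>
definition C2x :: "real \<Rightarrow> ereal \<Rightarrow> (real^'n \<Rightarrow> real \<Rightarrow> real) \<Rightarrow> bool" where
  "C2x R T u \<longleftrightarrow>
     continuous_on (cball 0 R \<times> tint T) (\<lambda>(x,t). u x t) \<and>
     (\<forall>t\<in>tint T. \<forall>x\<in>ball 0 R.
        (\<lambda>y. u y t) differentiable (at x) \<and>
        (\<forall>i. (\<lambda>y. pd (\<lambda>z. u z t) i y) differentiable (at x))) \<and>
     (\<forall>i. \<exists>G. continuous_on (cball 0 R \<times> tint T) (\<lambda>(x,t). G x t) \<and>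
        (\<forall>t\<in>tint T. \<forall>x\<in>ball 0 R. G x t = pd (\<lambda>z. u z t) i x)) \<and>
     (\<forall>i j. \<exists>H. continuous_on (cball 0 R \<times> tint T) (\<lambda>(x,t). H x t) \<and>
        (\<forall>t\<in>tint T. \<forall>x\<in>ball 0 R. H x t = pd (\<lambda>y. pd (\<lambda>z. u z t) i y) j x))"

definition C21 :: "real \<Rightarrow> ereal \<Rightarrow> (real^'n \<Rightarrow> real \<Rightarrow> real) \<Rightarrow> bool" where
  "C21 R T u \<longleftrightarrow> C2x R T u \<and>
     (\<forall>t\<in>tint T. \<forall>x\<in>ball 0 R. (\<lambda>s. u x s) differentiable (at t)) \<and>
     (\<exists>Ut. continuous_on (cball 0 R \<times> tint T) (\<lambda>(x,t). Ut x t) \<and>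
        (\<forall>t\<in>tint T. \<forall>x\<in>ball 0 R. Ut x t = deriv (\<lambda>s. u x s) t))"

definition radial :: "real \<Rightarrow> (real^'n \<Rightarrow> real) \<Rightarrow> bool" where
  "radial R f \<longleftrightarrow> (\<forall>x\<in>cball 0 R. \<forall>y\<in>cball 0 R. norm x = norm y \<longrightarrow> f x = f y)"

text \<open>Nonnegative classical solution on [0,T). Since chi is only defined on (0,infinity),
  the classical meaning of chi(v) requires v > 0.\<close>
definition ks_sol :: "real \<Rightarrow> real \<Rightarrow> (real \<Rightarrow> real) \<Rightarrow> (real^'n \<Rightarrow> real) \<Rightarrow> ereal
    \<Rightarrow> (real^'n \<Rightarrow> real \<Rightarrow> real) \<Rightarrow> (real^'n \<Rightarrow> real \<Rightarrow> real) \<Rightarrow> bool" where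
  "ks_sol R m chi u0 T u v \<longleftrightarrow>
     0 < T \<and>
     continuous_on (cball 0 R \<times> {t. 0 \<le> t \<and> ereal t < T}) (\<lambda>(x,t). u x t) \<and>
     C21 R T u \<and> C2x R T v \<and>
     (\<forall>x\<in>cball 0 R. u x 0 = u0 x) \<and>
     (\<forall>x\<in>cball 0 R. \<forall>t\<in>tint T. 0 \<le> u x t \<and> 0 < v x t) \<and>
     (\<forall>x\<in>ball 0 R. \<forall>t\<in>tint T.
        deriv (\<lambda>s. u x s) t =
          dvg (\<lambda>y. grad (\<lambda>z. (u z t + 1) powr m) y) x
          - dvg (\<lambda>y. (u y t * chi (v y t)) *\<^sub>R grad (\<lambda>z. v z t) y) x) \<and>
     (\<forall>x\<in>ball 0 R. \<forall>t\<in>tint T.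
        0 = dvg (\<lambda>y. grad (\<lambda>z. v z t) y) x - v x t + u x t) \<and>
     (\<forall>x\<in>sphere 0 R. \<forall>t\<in>tint T.
        ((\<lambda>y. grad (\<lambda>z. u z t) y \<bullet> x) \<longlongrightarrow> 0) (at x within ball 0 R) \<and>
        ((\<lambda>y. grad (\<lambda>z. v z t) y \<bullet> x) \<longlongrightarrow> 0) (at x within ball 0 R))"

definition ks_maximal :: "real \<Rightarrow> real \<Rightarrow> (real \<Rightarrow> real) \<Rightarrow> (real^'n \<Rightarrow> real) \<Rightarrow> ereal
    \<Rightarrow> (real^'n \<Rightarrow> real \<Rightarrow> real) \<Rightarrow> (real^'n \<Rightarrow> real \<Rightarrow> real) \<Rightarrow> bool" where
  "ks_maximal R m chi u0 T u v \<longleftrightarrow>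
     ks_sol R m chi u0 T u v \<and>
     \<not> (\<exists>T' u' v'. T < T' \<and> ks_sol R m chi u0 T' u' v' \<and>
          (\<forall>x\<in>cball 0 R. \<forall>t. 0 \<le> t \<and> ereal t < T \<longrightarrow> u' x t = u x t \<and> v' x t = v x t))"

definition e1 :: "real^'n" where "e1 = axis (SOME i. True) 1"

definition prof :: "(real^'n \<Rightarrow> real \<Rightarrow> real) \<Rightarrow> real \<Rightarrow> real \<Rightarrow> real" where
  "prof f r t = f (r *\<^sub>R (e1::real^'n)) t"

definition wfun :: "(real^'n \<Rightarrow> real \<Rightarrow> real) \<Rightarrow> real \<Rightarrow> real \<Rightarrow> real" where
  "wfun u s t = integral {0 .. s powr (1 / real CARD('n))}
      (\<lambda>\<rho>. \<rho> ^ (CARD('n) - 1) * prof u \<rho> t)"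

definition I2 :: "real \<Rightarrow> (real \<Rightarrow> real) \<Rightarrow> (real^'n \<Rightarrow> real \<Rightarrow> real) \<Rightarrow> (real^'n \<Rightarrow> real \<Rightarrow> real)
    \<Rightarrow> real \<Rightarrow> real \<Rightarrow> real" where
  "I2 \<gamma> chi u v s0 t = real CARD('n) * integral {0..s0} (\<lambda>s.
      s powr (-\<gamma>) * (s0 - s) * chi (real CARD('n) * deriv (\<lambda>\<sigma>. wfun v \<sigma> t) s)
      * wfun u s t * deriv (\<lambda>\<sigma>. wfun u \<sigma> t) s)"

definition mass :: "real \<Rightarrow> (real^'n \<Rightarrow> real) \<Rightarrow> real" where
  "mass R u0 = integral (ball 0 R) u0"

definition eta :: "real \<Rightarrow> (real^'n \<Rightarrow> real) \<Rightarrow> real" where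
  "eta R u0 = mass R u0 * integral {0<..} (\<lambda>t::real.
      (4 * pi * t) powr (- real CARD('n) / 2) * exp (- (t + (2 * R)^2 / (4 * t))))"

definition cond_C1 :: "(real \<Rightarrow> real) \<Rightarrow> real \<Rightarrow> real \<Rightarrow> real \<Rightarrow> bool" where
  "cond_C1 chi chi0 a k \<longleftrightarrow> 0 < chi0 \<and> 0 \<le> a \<and> 0 < k \<and>
     (\<forall>s>0. chi s \<ge> chi0 * (a + s) powr (-k))"

text \<open>chi in C^1((0,inf)) and in L^inf(eta,inf) (chi is continuous there, so ess sup = sup).\<close>
definition cond_C2 :: "(real \<Rightarrow> real) \<Rightarrow> real \<Rightarrow> bool" where
  "cond_C2 chi \<eta> \<longleftrightarrow> (\<forall>s>0. chi differentiable (at s)) \<and>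
     continuous_on {0<..} (deriv chi) \<and> (\<exists>B. \<forall>s>\<eta>. \<bar>chi s\<bar> \<le> B)"

definition init_ok :: "real \<Rightarrow> (real^'n \<Rightarrow> real) \<Rightarrow> bool" where
  "init_ok R u0 \<longleftrightarrow> continuous_on (cball 0 R) u0 \<and> (\<forall>x\<in>cball 0 R. 0 \<le> u0 x) \<and>
     (\<exists>x\<in>cball 0 R. u0 x \<noteq> 0) \<and> radial R u0"

end

theory Submission
  imports Defs
begin

(* With s = r^N, N z_s(s) = v(r) and w_s(s) = u(r)/N, where r = s^(1/N).  The decay bound gives
   a + v(r) <= (a R^(N-2) + Cv) r^(2-N), so (C1) yields
   chi(v(r)) >= chi0 (a R^(N-2) + Cv)^(-k) s^((1-2/N)k).  All other factors of the integrand of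
   I_2 are nonnegative, so the bound passes through the integral; both integrands are
   s^(-gamma) times a continuous function, which is integrable because gamma < 1. *)

lemma integrable_on_powr_times_continuous:
  fixes \<Phi> :: "real \<Rightarrow> real"
  assumes cont: "continuous_on {0..b} \<Phi>" and "0 \<le> b" and "\<gamma> < 1"
  shows "(\<lambda>s. s powr (-\<gamma>) * \<Phi> s) integrable_on {0..b}"
proof -
  obtain B where B: "\<And>s. s \<in> {0..b} \<Longrightarrow> \<bar>\<Phi> s\<bar> \<le> B"
    using compact_imp_bounded[OF compact_continuous_image[OF cont compact_Icc]]
    unfolding bounded_iff by (metis atLeastAtMost_iff image_eqI real_norm_def)
  have majorant: "(\<lambda>s. B * s powr (-\<gamma>)) integrable_on {0<..b}"
    using integrable_on_powr_from_0'[of "-\<gamma>" b] assms by (intro integrable_on_mult_right) auto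
  have "continuous_on {0<..b} (\<lambda>s. s powr (-\<gamma>) * \<Phi> s)"
    by (intro continuous_intros continuous_on_subset[OF cont]) auto
  then have "(\<lambda>s. s powr (-\<gamma>) * \<Phi> s) \<in> borel_measurable (lebesgue_on {0<..b})"
    by (rule continuous_imp_measurable_on_sets_lebesgue) auto
  then have "(\<lambda>s. s powr (-\<gamma>) * \<Phi> s) integrable_on {0<..b}"
    by (rule measurable_bounded_by_integrable_imp_integrable_real[OF _ majorant])
       (use B in \<open>auto simp: abs_mult mult.commute mult_right_mono\<close>)
  then show ?thesis
    by (rule integrable_spike_set) (auto intro: negligible_subset[of "{0}"])
qed

lemma integral_mono_powr_weight:
  fixes f g \<Phi> \<Psi> :: "real \<Rightarrow> real"
  assumes \<Phi>: "continuous_on {0..b} \<Phi>" and \<Psi>: "continuous_on {0..b} \<Psi>"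
    and "0 \<le> b" "\<gamma> < 1"
    and f: "\<And>s. s \<in> {0<..b} \<Longrightarrow> f s = s powr (-\<gamma>) * \<Phi> s"
    and g: "\<And>s. s \<in> {0<..b} \<Longrightarrow> g s = s powr (-\<gamma>) * \<Psi> s"
    and le: "\<And>s. s \<in> {0<..b} \<Longrightarrow> c * \<Psi> s \<le> \<Phi> s"
  shows "c * integral {0..b} g \<le> integral {0..b} f"
proof -
  have "integral {0..b} f = integral {0..b} (\<lambda>s. s powr (-\<gamma>) * \<Phi> s)"
    by (rule integral_spike[of "{0}"]) (use f in auto)
  moreover have "integral {0..b} g = integral {0..b} (\<lambda>s. s powr (-\<gamma>) * \<Psi> s)"
    by (rule integral_spike[of "{0}"]) (use g in auto)
  moreover have "c * (s powr (-\<gamma>) * \<Psi> s) \<le> s powr (-\<gamma>) * \<Phi> s" if "s \<in> {0..b}" for s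
    using le[of s] that by (cases "s = 0") (auto simp: mult.left_commute intro: mult_left_mono)
  then have "integral {0..b} (\<lambda>s. c * (s powr (-\<gamma>) * \<Psi> s))
      \<le> integral {0..b} (\<lambda>s. s powr (-\<gamma>) * \<Phi> s)"
    using assms by (intro integral_le integrable_on_mult_right integrable_on_powr_times_continuous)
  ultimately show ?thesis by simp
qed

lemma deriv_integral_upto_root:
  fixes p :: "real \<Rightarrow> real" and n :: nat
  assumes cont: "continuous_on {0..R} p" and "1 \<le> n" and s: "0 < s" "s powr (1 / n) < R"
  shows "deriv (\<lambda>\<sigma>. integral {0..\<sigma> powr (1 / n)} (\<lambda>\<rho>. \<rho> ^ (n - 1) * p \<rho>)) s
    = p (s powr (1 / n)) / n"
proof -
  define r where "r = s powr (1 / n)"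
  have r: "0 < r" "r < R" using s by (auto simp: r_def)
  have "continuous_on {0..R} (\<lambda>\<rho>. \<rho> ^ (n - 1) * p \<rho>)"
    by (intro continuous_intros cont)
  then have "((\<lambda>x. integral {0..x} (\<lambda>\<rho>. \<rho> ^ (n - 1) * p \<rho>)) has_vector_derivative r ^ (n - 1) * p r)
      (at r within {0..R})"
    using integral_has_vector_derivative[of 0 R _ r] r by auto
  moreover have "at r within {0..R} = at r"
    by (rule at_within_interior) (use r in auto)
  ultimately have outer: "((\<lambda>x. integral {0..x} (\<lambda>\<rho>. \<rho> ^ (n - 1) * p \<rho>))
      has_real_derivative r ^ (n - 1) * p r) (at r)"
    by (simp add: has_real_derivative_iff_has_vector_derivative)
  have inner: "((\<lambda>z. z powr (1 / n)) has_real_derivative (1 / n) * s powr (1 / n - 1)) (at s)"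
    by (rule has_real_derivative_powr) (use s in auto)
  have "r ^ (n - 1) = s powr ((real n - 1) / n)"
    using r s \<open>1 \<le> n\<close> by (simp add: r_def powr_realpow[symmetric] powr_powr of_nat_diff)
  then have "r ^ (n - 1) * s powr (1 / n - 1) = 1"
    using s \<open>1 \<le> n\<close> by (simp add: powr_add[symmetric] diff_divide_distrib)
  then have "r ^ (n - 1) * p r * ((1 / n) * s powr (1 / n - 1)) = p r / n"
    by (simp add: field_simps)
  then show ?thesis
    using DERIV_imp_deriv[OF DERIV_chain2[OF outer[unfolded r_def] inner]] by (simp add: r_def)
qed

lemma continuous_on_compose_root:
  fixes q :: "real \<Rightarrow> real"
  assumes q: "continuous_on {0..R} q" and "0 < n" and "s0 powr (1 / n) \<le> R"
  shows "continuous_on {0..s0} (\<lambda>s. q (s powr (1 / n)))"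
proof (rule continuous_on_compose2[OF q])
  show "continuous_on {0..s0} (\<lambda>s. s powr (1 / n))"
    by (rule continuous_on_powr') (use assms in \<open>auto intro: continuous_intros\<close>)
  show "(\<lambda>s. s powr (1 / n)) ` {0..s0} \<subseteq> {0..R}"
    using powr_mono2[of "1 / n" _ s0] assms by fastforce
qed

lemma powr_inverse_less_of_less_power:
  fixes s R :: real
  assumes "0 \<le> s" "s < R ^ n" "0 < R" "0 < n"
  shows "s powr (1 / n) < R"
proof -
  have "s powr (1 / n) < (R ^ n) powr (1 / n)"
    using assms by (intro powr_less_mono2) auto
  also have "\<dots> = R"
    using assms by (simp add: powr_realpow[symmetric] powr_powr)
  finally show ?thesis .
qed

lemma chi_lower_bound:
  fixes chi :: "real \<Rightarrow> real"
  assumes C1: "\<And>s. 0 < s \<Longrightarrow> chi0 * (a + s) powr (-k) \<le> chi s"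
    and "0 \<le> chi0" "0 \<le> a" "0 \<le> k" "0 \<le> d"
    and h: "0 < h" "h \<le> Cv * r powr (-d)" and r: "0 < r" "r \<le> R"
  shows "chi0 * (a * R powr d + Cv) powr (-k) * r powr (d * k) \<le> chi h"
proof -
  have "a * (R powr d * R powr (-d)) \<le> a * (R powr d * r powr (-d))"
    using assms by (intro mult_left_mono powr_mono2' mult_left_mono) auto
  then have "a \<le> a * R powr d * r powr (-d)"
    using r by (simp add: powr_add[symmetric] mult.assoc)
  with h have "a + h \<le> (a * R powr d + Cv) * r powr (-d)"
    by (simp add: distrib_right)
  then have "((a * R powr d + Cv) * r powr (-d)) powr (-k) \<le> (a + h) powr (-k)"
    using assms by (intro powr_mono2') auto
  moreover have "((a * R powr d + Cv) * r powr (-d)) powr (-k) = (a * R powr d + Cv) powr (-k) * r powr (d * k)"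
    using \<open>a + h \<le> _\<close> h r \<open>0 \<le> a\<close>
    by (subst powr_mult) (auto simp: powr_powr zero_le_mult_iff powr_gt_zero)
  ultimately have "chi0 * ((a * R powr d + Cv) powr (-k) * r powr (d * k)) \<le> chi0 * (a + h) powr (-k)"
    using assms by (intro mult_left_mono) auto
  also have "\<dots> \<le> chi h" using C1 h by simp
  finally show ?thesis by (simp add: mult.assoc)
qed

lemma chi_lower_bound_root:
  fixes chi :: "real \<Rightarrow> real" and n :: real
  assumes C1: "\<And>s. 0 < s \<Longrightarrow> chi0 * (a + s) powr (-k) \<le> chi s"
    and "0 \<le> chi0" "0 \<le> a" "0 \<le> k" "2 \<le> n"
    and h: "0 < h" "h \<le> Cv * (s powr (1 / n)) powr (2 - n)" and s: "0 < s" "s powr (1 / n) \<le> R"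
  shows "chi0 * (a * R powr (n - 2) + Cv) powr (-k) * s powr ((1 - 2 / n) * k) \<le> chi h"
proof -
  have "(s powr (1 / n)) powr ((n - 2) * k) = s powr ((1 - 2 / n) * k)"
    using \<open>2 \<le> n\<close> by (simp add: powr_powr field_simps)
  moreover have "chi0 * (a * R powr (n - 2) + Cv) powr (-k) * (s powr (1 / n)) powr ((n - 2) * k) \<le> chi h"
    by (rule chi_lower_bound[OF C1]) (use assms in auto)
  ultimately show ?thesis by simp
qed

lemma continuous_on_wfun:
  fixes u :: "real^'n \<Rightarrow> real \<Rightarrow> real"
  assumes "continuous_on {0..R} (\<lambda>\<rho>. prof u \<rho> t)" "s0 powr (1 / CARD('n)) \<le> R"
  shows "continuous_on {0..s0} (\<lambda>s. wfun u s t)"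
proof -
  have "continuous_on {0..R} (\<lambda>x. integral {0..x} (\<lambda>\<rho>. \<rho> ^ (CARD('n) - 1) * prof u \<rho> t))"
    by (intro indefinite_integral_continuous_1 integrable_continuous_interval continuous_intros assms(1))
  then show ?thesis
    unfolding wfun_def by (rule continuous_on_compose_root) (use assms(2) in auto)
qed

lemma wfun_nonneg:
  fixes u :: "real^'n \<Rightarrow> real \<Rightarrow> real"
  assumes "continuous_on {0..R} (\<lambda>\<rho>. prof u \<rho> t)" "\<And>\<rho>. \<rho> \<in> {0..R} \<Longrightarrow> 0 \<le> prof u \<rho> t"
    and "s powr (1 / CARD('n)) \<le> R"
  shows "0 \<le> wfun u s t"
  unfolding wfun_def using assms
  by (intro integral_nonneg integrable_continuous_interval continuous_intros
      continuous_on_subset[OF assms(1)]) auto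

lemma deriv_wfun:
  fixes u :: "real^'n \<Rightarrow> real \<Rightarrow> real"
  assumes "continuous_on {0..R} (\<lambda>\<rho>. prof u \<rho> t)" "0 < s" "s powr (1 / CARD('n)) < R"
  shows "deriv (\<lambda>\<sigma>. wfun u \<sigma> t) s = prof u (s powr (1 / CARD('n))) t / CARD('n)"
  unfolding wfun_def by (rule deriv_integral_upto_root) (use assms in auto)

lemma continuous_on_prof:
  fixes f :: "real^'n \<Rightarrow> real \<Rightarrow> real"
  assumes "continuous_on (cball 0 R \<times> S) (\<lambda>(x, t). f x t)" "t \<in> S"
  shows "continuous_on {0..R} (\<lambda>\<rho>. prof f \<rho> t)"
  unfolding prof_def
  by (rule continuous_on_compose2[OF assms(1), where f = "\<lambda>\<rho>. (\<rho> *\<^sub>R e1, t)", simplified])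
     (use assms(2) in \<open>auto intro!: continuous_intros simp: e1_def\<close>)

lemma norm_e1 [simp]: "norm (e1 :: real^'n) = 1"
  by (simp add: e1_def)

lemma ks_sol_profile:
  fixes u v :: "real^'n \<Rightarrow> real \<Rightarrow> real"
  assumes sol: "ks_sol R m chi u0 T u v" and t: "t \<in> tint T"
  shows "continuous_on {0..R} (\<lambda>\<rho>. prof u \<rho> t)" "continuous_on {0..R} (\<lambda>\<rho>. prof v \<rho> t)"
    and "\<And>\<rho>. \<rho> \<in> {0..R} \<Longrightarrow> 0 \<le> prof u \<rho> t" "\<And>\<rho>. \<rho> \<in> {0..R} \<Longrightarrow> 0 < prof v \<rho> t"
proof -
  show "continuous_on {0..R} (\<lambda>\<rho>. prof u \<rho> t)" "continuous_on {0..R} (\<lambda>\<rho>. prof v \<rho> t)"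
    using sol by (auto intro!: continuous_on_prof[OF _ t] simp: ks_sol_def C21_def C2x_def)
  fix \<rho> :: real assume "\<rho> \<in> {0..R}"
  then have "\<rho> *\<^sub>R e1 \<in> cball (0 :: real^'n) R"
    by simp
  then show "0 \<le> prof u \<rho> t" "0 < prof v \<rho> t"
    using sol t unfolding ks_sol_def prof_def by blast+
qed

lemma prof_le_of_norm_bound:
  fixes f :: "real^'n \<Rightarrow> real \<Rightarrow> real"
  assumes "\<forall>x\<in>ball 0 R. x \<noteq> 0 \<longrightarrow> f x t \<le> c * norm x powr e" and "\<rho> \<in> {0<..<R}"
  shows "prof f \<rho> t \<le> c * \<rho> powr e"
proof -
  have norm_ray: "norm (\<rho> *\<^sub>R (e1 :: real^'n)) = \<rho>"
    using assms(2) by simp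
  then have "\<rho> *\<^sub>R e1 \<in> ball (0 :: real^'n) R" "\<rho> *\<^sub>R (e1 :: real^'n) \<noteq> 0"
    using assms(2) by (auto simp del: norm_scaleR)
  then show ?thesis
    using assms(1) norm_ray unfolding prof_def by metis
qed

lemma continuous_on_chi_of_cond_C2:
  assumes "cond_C2 chi \<eta>"
  shows "continuous_on {0<..} chi"
  using assms by (auto simp: cond_C2_def intro!: continuous_at_imp_continuous_on differentiable_imp_continuous_within)

lemma I2_ge_weighted_integral:
  fixes u v :: "real^'n \<Rightarrow> real \<Rightarrow> real" and chi :: "real \<Rightarrow> real"
  defines "N \<equiv> real CARD('n)"
  assumes dim: "3 \<le> CARD('n)" and R: "0 < R"
    and C1: "\<And>s. 0 < s \<Longrightarrow> chi0 * (a + s) powr (-k) \<le> chi s"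
    and chi_cont: "continuous_on {0<..} chi"
    and chi0: "0 \<le> chi0" and a: "0 \<le> a" and k: "0 < k" and "\<gamma> < 1"
    and u_cont: "continuous_on {0..R} (\<lambda>\<rho>. prof u \<rho> t)"
    and u_nonneg: "\<And>\<rho>. \<rho> \<in> {0..R} \<Longrightarrow> 0 \<le> prof u \<rho> t"
    and v_cont: "continuous_on {0..R} (\<lambda>\<rho>. prof v \<rho> t)"
    and v_pos: "\<And>\<rho>. \<rho> \<in> {0..R} \<Longrightarrow> 0 < prof v \<rho> t"
    and v_bound: "\<And>\<rho>. \<rho> \<in> {0<..<R} \<Longrightarrow> prof v \<rho> t \<le> Cv * \<rho> powr (2 - N)"
    and s0: "0 < s0" "s0 < R ^ CARD('n)"
  shows "N * (chi0 * (a * R powr (N - 2) + Cv) powr (-k)) * integral {0..s0} (\<lambda>s.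
      s powr (-\<gamma> + (1 - 2 / N) * k) * (s0 - s) * wfun u s t * deriv (\<lambda>\<sigma>. wfun u \<sigma> t) s)
    \<le> I2 \<gamma> chi u v s0 t"
proof -
  have N: "3 \<le> N" using dim by (simp add: N_def)
  have root_less: "s powr (1 / N) < R" if "0 \<le> s" "s \<le> s0" for s
    using powr_inverse_less_of_less_power[of s R "CARD('n)"] that s0 R by (simp add: N_def)
  have root_s0: "s0 powr (1 / N) \<le> R"
    using root_less[of s0] s0 by simp
  define ws where "ws s = prof u (s powr (1 / N)) t / N" for s
  define \<Phi> where "\<Phi> s = (s0 - s) * chi (prof v (s powr (1 / N)) t) * wfun u s t * ws s" for s
  define \<Psi> where "\<Psi> s = s powr ((1 - 2 / N) * k) * (s0 - s) * wfun u s t * ws s" for s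
  have ws_deriv: "deriv (\<lambda>\<sigma>. wfun u \<sigma> t) s = ws s" if "s \<in> {0<..s0}" for s
    using deriv_wfun[OF u_cont] root_less that by (simp add: ws_def N_def)
  have cont_wfun: "continuous_on {0..s0} (\<lambda>s. wfun u s t)"
    using continuous_on_wfun[OF u_cont] root_s0 by (simp add: N_def)
  have cont_ws: "continuous_on {0..s0} ws"
    unfolding ws_def using N root_s0
    by (intro continuous_intros continuous_on_compose_root[OF u_cont]) auto
  have cont_chi_v: "continuous_on {0..s0} (\<lambda>s. chi (prof v (s powr (1 / N)) t))"
    by (rule continuous_on_compose2[OF chi_cont continuous_on_compose_root[OF v_cont]])
       (use N root_s0 in \<open>auto intro!: v_pos less_imp_le[OF root_less]\<close>)
  have pointwise: "chi0 * (a * R powr (N - 2) + Cv) powr (-k) * \<Psi> s \<le> \<Phi> s" if s: "s \<in> {0<..s0}" for s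
  proof -
    have "chi0 * (a * R powr (N - 2) + Cv) powr (-k) * s powr ((1 - 2 / N) * k)
        \<le> chi (prof v (s powr (1 / N)) t)"
      using chi0 a k s N root_less v_pos v_bound
      by (intro chi_lower_bound_root[OF C1]) (auto simp: less_imp_le)
    moreover have "0 \<le> (s0 - s) * wfun u s t * ws s"
      using s N root_less u_nonneg wfun_nonneg[OF u_cont u_nonneg, of s]
      by (auto simp: ws_def N_def less_imp_le)
    ultimately have "chi0 * (a * R powr (N - 2) + Cv) powr (-k) * s powr ((1 - 2 / N) * k)
        * ((s0 - s) * wfun u s t * ws s) \<le> chi (prof v (s powr (1 / N)) t) * ((s0 - s) * wfun u s t * ws s)"
      by (rule mult_right_mono)
    then show ?thesis
      by (simp add: \<Phi>_def \<Psi>_def mult_ac)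
  qed
  have "chi0 * (a * R powr (N - 2) + Cv) powr (-k) * integral {0..s0} (\<lambda>s.
      s powr (-\<gamma> + (1 - 2 / N) * k) * (s0 - s) * wfun u s t * deriv (\<lambda>\<sigma>. wfun u \<sigma> t) s)
    \<le> integral {0..s0} (\<lambda>s. s powr (-\<gamma>) * (s0 - s) * chi (N * deriv (\<lambda>\<sigma>. wfun v \<sigma> t) s)
      * wfun u s t * deriv (\<lambda>\<sigma>. wfun u \<sigma> t) s)"
  proof (rule integral_mono_powr_weight[where \<Phi> = \<Phi> and \<Psi> = \<Psi>])
    show "continuous_on {0..s0} \<Phi>" "continuous_on {0..s0} \<Psi>"
      unfolding \<Phi>_def \<Psi>_def using k N
      by (auto intro!: continuous_intros cont_wfun cont_ws cont_chi_v continuous_on_powr')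
  next
    fix s assume s: "s \<in> {0<..s0}"
    then show "s powr (-\<gamma> + (1 - 2 / N) * k) * (s0 - s) * wfun u s t * deriv (\<lambda>\<sigma>. wfun u \<sigma> t) s
        = s powr (-\<gamma>) * \<Psi> s"
      using powr_add[of s "-\<gamma>" "(1 - 2 / N) * k"] by (simp add: \<Psi>_def ws_deriv mult_ac)
    have "N * deriv (\<lambda>\<sigma>. wfun v \<sigma> t) s = prof v (s powr (1 / N)) t"
      using deriv_wfun[OF v_cont] root_less s N by (simp add: N_def)
    then show "s powr (-\<gamma>) * (s0 - s) * chi (N * deriv (\<lambda>\<sigma>. wfun v \<sigma> t) s)
        * wfun u s t * deriv (\<lambda>\<sigma>. wfun u \<sigma> t) s = s powr (-\<gamma>) * \<Phi> s"
      using s by (simp add: \<Phi>_def ws_deriv mult_ac)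
  qed (use pointwise s0 assms in auto)
  then show ?thesis
    unfolding I2_def N_def[symmetric] using N by (simp add: mult.assoc)
qed

theorem lemma3p3:
  fixes R chi0 a k Cv :: real
  assumes "CARD('n) \<ge> 3"
    and "0 < R" and "0 < chi0" and "0 \<le> a" and "0 < k" and "0 < Cv"
  shows "\<exists>C>0. \<forall>(\<gamma>::real) (m::real) (chi::real \<Rightarrow> real) (u0::real^'n \<Rightarrow> real) (T::ereal)
            (u::real^'n \<Rightarrow> real \<Rightarrow> real) (v::real^'n \<Rightarrow> real \<Rightarrow> real).
      0 < \<gamma> \<and> \<gamma> < 1 \<and> 1 \<le> m \<and>
      cond_C1 chi chi0 a k \<and> cond_C2 chi (eta R u0) \<and> init_ok R u0 \<and>
      ks_maximal R m chi u0 T u v \<and>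
      (\<forall>t\<in>tint T. radial R (\<lambda>x. u x t) \<and> radial R (\<lambda>x. v x t)) \<and>
      (\<forall>x\<in>ball 0 R. \<forall>t\<in>tint T. x \<noteq> 0 \<longrightarrow> v x t \<le> Cv * norm x powr (2 - real CARD('n)))
      \<longrightarrow> (\<forall>t\<in>tint T. \<forall>s0\<in>{0<..<R ^ CARD('n)}.
            I2 \<gamma> chi u v s0 t \<ge> C * integral {0..s0} (\<lambda>s.
               s powr (-\<gamma> + (1 - 2 / real CARD('n)) * k) * (s0 - s)
               * wfun u s t * deriv (\<lambda>\<sigma>. wfun u \<sigma> t) s))"
proof -
  define C where "C = real CARD('n) * (chi0 * (a * R powr (real CARD('n) - 2) + Cv) powr (-k))"
  have "0 < a * R powr (real CARD('n) - 2) + Cv"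
    using assms by (intro add_nonneg_pos) auto
  then have C_pos: "0 < C"
    using assms by (simp add: C_def)
  have bound: "C * integral {0..s0} (\<lambda>s. s powr (-\<gamma> + (1 - 2 / real CARD('n)) * k) * (s0 - s)
      * wfun u s t * deriv (\<lambda>\<sigma>. wfun u \<sigma> t) s) \<le> I2 \<gamma> chi u v s0 t"
    if "\<gamma> < 1" "cond_C1 chi chi0 a k" "cond_C2 chi \<eta>" "ks_sol R m chi u0 T u v" "t \<in> tint T"
      "\<forall>x\<in>ball 0 R. \<forall>t\<in>tint T. x \<noteq> 0 \<longrightarrow> v x t \<le> Cv * norm x powr (2 - real CARD('n))"
      "s0 \<in> {0<..<R ^ CARD('n)}"
    for \<gamma> m \<eta> t s0 :: real and chi :: "real \<Rightarrow> real" and u0 :: "real^'n \<Rightarrow> real" and T :: ereal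
      and u v :: "real^'n \<Rightarrow> real \<Rightarrow> real"
  proof -
    have v_bound: "\<forall>x\<in>ball 0 R. x \<noteq> 0 \<longrightarrow> v x t \<le> Cv * norm x powr (2 - real CARD('n))"
      using that(5,6) by blast
    show ?thesis
      unfolding C_def using that assms ks_sol_profile[OF that(4,5)]
      by (intro I2_ge_weighted_integral continuous_on_chi_of_cond_C2[OF that(3)])
         (auto simp: cond_C1_def intro: prof_le_of_norm_bound[where f = v, OF v_bound])
  qed
  show ?thesis
    unfolding ks_maximal_def
    by (intro exI[of _ C] conjI C_pos allI impI ballI) (elim conjE, rule bound; assumption)
qed

end
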